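(* Let $A$ be an infinite set, $I$ a set, and $F$ a filter on the partition lattice $\Pi(I)$. Let $\theta$ be a congruence on the algebra $\Omega(A)^{F}$. Define $Z\subseteq\{\emptyset\}\cup\bigcup F$ by: $R\in Z$ if and only if for all $f,g\in\Omega(A)^{F}$ with $f|_{R}=g|_{R}$ we have $(f,g)\in\theta$. Then $Z$ is a filter on the Boolean algebra $\{\emptyset\}\cup\bigcup F$, and for all $f,g\in\Omega(A)^{F}$ we have $(f,g)\in\theta$ if and only if $\{i\in I: f(i)=g(i)\}\in Z$.
   Context: For each $a\in A$ let $\hat{a}$ be a constant symbol, and for each $n\geq1$ and each $f:A^{n}\to A$ let $\hat{f}$ be an $n$-ary operation symbol. $\Omega(A)$ is the algebra with universe $A$ in which $\hat{a}$ is interpreted as $a$ and $\hat{f}$ as $f$. $\Pi(I)$ is the lattice of partitions of $I$ (with nonempty blocks), where $P\preceq Q$ means $P$ refines $Q$ and $P\wedge Q$ is the common refinement; a filter $F$ on $\Pi(I)$ is a nonempty set closed under $\wedge$ and upward closed under coarsening. For $f:I\to X$, $\Pi(f)=\{f^{-1}(\{x\}):x\in X\}\setminus\{\emptyset\}$. $\Omega(A)^{F}$ denotes the subalgebra $\{f\in A^{I}:\Pi(f)\in F\}$ of $\Omega(A)^{I}$. $\bigcup F$ denotes the set of all blocks of all partitions in $F$; the set $\{\emptyset\}\cup\bigcup F$ is a Boolean algebra of subsets of $I$ under the set operations. *)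

theory Defs
  imports "HOL-Library.Disjoint_Sets" "HOL-Library.FuncSet"
begin

definition refines :: "'i set set \<Rightarrow> 'i set set \<Rightarrow> bool" where
  "refines P Q \<longleftrightarrow> (\<forall>p\<in>P. \<exists>q\<in>Q. p \<subseteq> q)"

definition part_meet :: "'i set set \<Rightarrow> 'i set set \<Rightarrow> 'i set set" where
  "part_meet P Q = {p \<inter> q | p q. p \<in> P \<and> q \<in> Q \<and> p \<inter> q \<noteq> {}}"

definition partition_filter :: "'i set \<Rightarrow> 'i set set set \<Rightarrow> bool" where
  "partition_filter I F \<longleftrightarrow>
     F \<noteq> {} \<and> (\<forall>P\<in>F. partition_on I P) \<and>
     (\<forall>P\<in>F. \<forall>Q\<in>F. part_meet P Q \<in> F) \<and>
     (\<forall>P\<in>F. \<forall>Q. partition_on I Q \<and> refines P Q \<longrightarrow> Q \<in> F)"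

definition fun_partition :: "'i set \<Rightarrow> ('i \<Rightarrow> 'a) \<Rightarrow> 'i set set" where
  "fun_partition I f = {{i \<in> I. f i = x} | x. True} - {{}}"

definition filtered_power :: "'a set \<Rightarrow> 'i set \<Rightarrow> 'i set set set \<Rightarrow> ('i \<Rightarrow> 'a) set" where
  "filtered_power A I F = {f \<in> I \<rightarrow>\<^sub>E A. fun_partition I f \<in> F}"

text \<open>An n-ary operation on A is represented as a function on lists of length n.
  Pointwise application in A^I.\<close>
definition pointwise :: "'i set \<Rightarrow> ('a list \<Rightarrow> 'a) \<Rightarrow> ('i \<Rightarrow> 'a) list \<Rightarrow> ('i \<Rightarrow> 'a)" where
  "pointwise I h fs = (\<lambda>i. if i \<in> I then h (map (\<lambda>f. f i) fs) else undefined)"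

text \<open>Congruence of Omega(A)^F: equivalence on the universe, compatible with every
  operation f : A^n -> A (n >= 1); constants impose no compatibility condition.\<close>
definition omega_congruence ::
  "'a set \<Rightarrow> 'i set \<Rightarrow> 'i set set set \<Rightarrow> (('i \<Rightarrow> 'a) \<times> ('i \<Rightarrow> 'a)) set \<Rightarrow> bool" where
  "omega_congruence A I F \<theta> \<longleftrightarrow>
     equiv (filtered_power A I F) \<theta> \<and>
     (\<forall>n::nat. \<forall>h. n \<ge> 1 \<and> (\<forall>xs. length xs = n \<and> set xs \<subseteq> A \<longrightarrow> h xs \<in> A) \<longrightarrow>
        (\<forall>fs gs. length fs = n \<and> length gs = n \<and> (\<forall>k<n. (fs ! k, gs ! k) \<in> \<theta>) \<longrightarrow>
            (pointwise I h fs, pointwise I h gs) \<in> \<theta>))"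

text \<open>A (not necessarily proper) filter of a Boolean algebra B of subsets.\<close>
definition set_filter_on :: "'i set set \<Rightarrow> 'i set set \<Rightarrow> bool" where
  "set_filter_on B Z \<longleftrightarrow> Z \<noteq> {} \<and> Z \<subseteq> B \<and>
     (\<forall>R\<in>Z. \<forall>S\<in>Z. R \<inter> S \<in> Z) \<and>
     (\<forall>R\<in>Z. \<forall>S\<in>B. R \<subseteq> S \<longrightarrow> S \<in> Z)"

end

theory Submission
  imports Defs
begin

text \<open>
  Every set arising here is saturated for some partition in F, and a function that is
  constant on the blocks of some P \<in> F lies in \<Omega>(A)^F; so equalizers of elements of \<Omega>(A)^F lie in
  the Boolean algebra, and two elements of \<Omega>(A)^F can be glued along any R in it. If (f, g) \<in> \<theta>
  and f', g' agree wherever f and g agree, then applying the 4-ary operation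
  (x, y, u, v) \<mapsto> (if x = y then v else u) to (f, g, f', g') and to (g, g, f', g') yields f' and g';
  hence (f', g') \<in> \<theta>, i.e. the equalizer of f and g lies in Z. Closure of Z under intersection
  follows by gluing: if f, g agree on R \<inter> S, the function equal to f on R and to g elsewhere
  is \<theta>-related to f (agreement on R) and to g (agreement on S).
\<close>

definition blockwise_constant :: "'i set set \<Rightarrow> ('i \<Rightarrow> 'b) \<Rightarrow> bool" where
  "blockwise_constant P h \<longleftrightarrow> (\<forall>p\<in>P. \<forall>i\<in>p. \<forall>j\<in>p. h i = h j)"

lemma blockwise_constant_fun_partition: "blockwise_constant (fun_partition I f) f"
  unfolding blockwise_constant_def fun_partition_def by auto

lemma blockwise_constant_part_meetI1: "blockwise_constant P f \<Longrightarrow> blockwise_constant (part_meet P Q) f"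
  unfolding blockwise_constant_def part_meet_def by blast

lemma blockwise_constant_part_meetI2: "blockwise_constant Q f \<Longrightarrow> blockwise_constant (part_meet P Q) f"
  unfolding blockwise_constant_def part_meet_def by blast

lemma blockwise_constant_comp2:
  "blockwise_constant P f \<Longrightarrow> blockwise_constant P g \<Longrightarrow> blockwise_constant P (\<lambda>i. k (f i) (g i))"
  unfolding blockwise_constant_def by metis

lemma blockwise_constant_if:
  assumes "blockwise_constant P (\<lambda>i. i \<in> R)" "blockwise_constant P f" "blockwise_constant P g"
  shows "blockwise_constant P (\<lambda>i. if i \<in> R then f i else g i)"
  using blockwise_constant_comp2[OF assms(1) blockwise_constant_comp2[OF assms(2,3), of Pair],
      of "\<lambda>b (x, y). if b then x else y"]
  by simp

lemma blockwise_constant_mem_block: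
  assumes "partition_on I P" and "R \<in> P"
  shows "blockwise_constant P (\<lambda>i. i \<in> R)"
  using assms unfolding blockwise_constant_def partition_on_def disjoint_def by blast

lemma partition_on_fun_partition: "partition_on I (fun_partition I f)"
  unfolding fun_partition_def by (rule partition_onI) (auto simp: disjnt_def)

lemma pointwise_eqI:
  assumes "f \<in> extensional I" and "\<And>i. i \<in> I \<Longrightarrow> h (map (\<lambda>g. g i) fs) = f i"
  shows "pointwise I h fs = f"
  using assms unfolding pointwise_def extensional_def by auto

context
  fixes I :: "'i set" and F :: "'i set set set"
  assumes filter: "partition_filter I F"
begin

lemma partition_on_filter_mem: "P \<in> F \<Longrightarrow> partition_on I P"
  using filter unfolding partition_filter_def by blast

lemma part_meet_filter_mem: "P \<in> F \<Longrightarrow> Q \<in> F \<Longrightarrow> part_meet P Q \<in> F"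
  using filter unfolding partition_filter_def by blast

lemma filter_blocks_subset: "R \<in> {{}} \<union> \<Union>F \<Longrightarrow> R \<subseteq> I"
  using partition_on_filter_mem partition_onD1 by blast

lemma fun_partition_filter_mem:
  assumes P: "P \<in> F" and h: "blockwise_constant P h"
  shows "fun_partition I h \<in> F"
proof -
  have P_part: "partition_on I P" using P by (rule partition_on_filter_mem)
  have "refines P (fun_partition I h)"
    unfolding refines_def
  proof
    fix p assume p: "p \<in> P"
    then have "p \<noteq> {}" using P_part partition_onD3 by blast
    then obtain i where i: "i \<in> p" by blast
    have "p \<subseteq> I" using p P_part partition_onD1 by blast
    then have "p \<subseteq> {j \<in> I. h j = h i}" using h p i unfolding blockwise_constant_def by blast
    moreover have "{j \<in> I. h j = h i} \<in> fun_partition I h"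
      using i \<open>p \<subseteq> I\<close> unfolding fun_partition_def by auto
    ultimately show "\<exists>q\<in>fun_partition I h. p \<subseteq> q" by blast
  qed
  then show ?thesis
    using filter P partition_on_fun_partition unfolding partition_filter_def by blast
qed

lemma filtered_powerI:
  "P \<in> F \<Longrightarrow> blockwise_constant P h \<Longrightarrow> h \<in> I \<rightarrow>\<^sub>E A \<Longrightarrow> h \<in> filtered_power A I F"
  unfolding filtered_power_def using fun_partition_filter_mem by blast

lemma saturated_filter_block:
  assumes "P \<in> F" and "blockwise_constant P \<phi>"
  shows "{i \<in> I. \<phi> i} \<in> {{}} \<union> \<Union>F"
proof -
  have "{i \<in> I. \<phi> i} \<in> fun_partition I \<phi>" if "{i \<in> I. \<phi> i} \<noteq> {}"
    using that unfolding fun_partition_def by auto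
  then show ?thesis using fun_partition_filter_mem[OF assms] by blast
qed

lemma top_filter_block: "I \<in> {{}} \<union> \<Union>F"
proof -
  obtain P where "P \<in> F" using filter unfolding partition_filter_def by blast
  from saturated_filter_block[OF this, of "\<lambda>_. True"] show ?thesis
    by (simp add: blockwise_constant_def)
qed

lemma Int_filter_block:
  assumes "R \<in> {{}} \<union> \<Union>F" and "S \<in> {{}} \<union> \<Union>F"
  shows "R \<inter> S \<in> {{}} \<union> \<Union>F"
proof (cases "R \<inter> S = {}")
  case False
  then obtain P Q where "P \<in> F" "R \<in> P" "Q \<in> F" "S \<in> Q" using assms by blast
  then have "R \<inter> S \<in> part_meet P Q" "part_meet P Q \<in> F"
    using False part_meet_filter_mem unfolding part_meet_def by blast+
  then show ?thesis by blast
qed simp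

lemma equalizer_filter_block:
  assumes "f \<in> filtered_power A I F" and "g \<in> filtered_power A I F"
  shows "{i \<in> I. f i = g i} \<in> {{}} \<union> \<Union>F"
proof -
  let ?M = "part_meet (fun_partition I f) (fun_partition I g)"
  have "?M \<in> F"
    using assms part_meet_filter_mem unfolding filtered_power_def by blast
  moreover have "blockwise_constant ?M (\<lambda>i. f i = g i)"
    by (rule blockwise_constant_comp2[of _ f g "(=)"])
      (simp_all add: blockwise_constant_part_meetI1 blockwise_constant_part_meetI2
        blockwise_constant_fun_partition)
  ultimately show ?thesis by (rule saturated_filter_block)
qed

lemma glue_filtered_power:
  assumes R: "R \<in> {{}} \<union> \<Union>F"
    and f: "f \<in> filtered_power A I F" and g: "g \<in> filtered_power A I F"
  shows "(\<lambda>i. if i \<in> R then f i else g i) \<in> filtered_power A I F"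
proof (cases "R = {}")
  case False
  then obtain P where P: "P \<in> F" "R \<in> P" using R by blast
  let ?M = "part_meet (part_meet (fun_partition I f) (fun_partition I g)) P"
  have "?M \<in> F"
    using f g P part_meet_filter_mem unfolding filtered_power_def by blast
  moreover have "blockwise_constant ?M (\<lambda>i. i \<in> R)"
      "blockwise_constant ?M f" "blockwise_constant ?M g"
    by (simp_all add: blockwise_constant_part_meetI1 blockwise_constant_part_meetI2
        blockwise_constant_fun_partition
        blockwise_constant_mem_block[OF partition_on_filter_mem[OF P(1)] P(2)])
  then have "blockwise_constant ?M (\<lambda>i. if i \<in> R then f i else g i)"
    by (rule blockwise_constant_if)
  moreover have "(\<lambda>i. if i \<in> R then f i else g i) \<in> I \<rightarrow>\<^sub>E A"
    using f g filter_blocks_subset[OF R] unfolding filtered_power_def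
    by (auto simp: PiE_iff extensional_def)
  ultimately show ?thesis by (rule filtered_powerI)
qed (use g in simp)

end

definition congruence_filter ::
  "'a set \<Rightarrow> 'i set \<Rightarrow> 'i set set set \<Rightarrow> (('i \<Rightarrow> 'a) \<times> ('i \<Rightarrow> 'a)) set \<Rightarrow> 'i set set" where
  "congruence_filter A I F \<theta> = {R \<in> {{}} \<union> \<Union>F. \<forall>f\<in>filtered_power A I F. \<forall>g\<in>filtered_power A I F.
     (\<forall>i\<in>R. f i = g i) \<longrightarrow> (f, g) \<in> \<theta>}"

context
  fixes A :: "'a set" and I :: "'i set" and F :: "'i set set set"
    and \<theta> :: "(('i \<Rightarrow> 'a) \<times> ('i \<Rightarrow> 'a)) set"
  assumes filter: "partition_filter I F"
    and congruence: "omega_congruence A I F \<theta>"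
begin

lemma congruence_equiv: "equiv (filtered_power A I F) \<theta>"
  using congruence unfolding omega_congruence_def by blast

lemma congruence_pointwise:
  assumes "n \<ge> 1" and "\<And>xs. length xs = n \<Longrightarrow> set xs \<subseteq> A \<Longrightarrow> h xs \<in> A"
    and "length fs = n" and "length gs = n" and "\<And>k. k < n \<Longrightarrow> (fs ! k, gs ! k) \<in> \<theta>"
  shows "(pointwise I h fs, pointwise I h gs) \<in> \<theta>"
  using congruence assms unfolding omega_congruence_def by blast

lemma congruence_transfer:
  assumes fg: "(f, g) \<in> \<theta>"
    and f': "f' \<in> filtered_power A I F" and g': "g' \<in> filtered_power A I F"
    and agree: "\<And>i. i \<in> I \<Longrightarrow> f i = g i \<Longrightarrow> f' i = g' i"
  shows "(f', g') \<in> \<theta>"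
proof -
  define switch :: "'a list \<Rightarrow> 'a" where
    "switch xs = (if xs ! 0 = xs ! 1 then xs ! 3 else xs ! 2)" for xs
  have g: "g \<in> filtered_power A I F"
    using fg congruence_equiv unfolding equiv_def refl_on_def by blast
  have refl: "(h, h) \<in> \<theta>" if "h \<in> filtered_power A I F" for h
    using that congruence_equiv unfolding equiv_def refl_on_def by blast
  have "([f, g, f', g'] ! k, [g, g, f', g'] ! k) \<in> \<theta>" if "k < 4" for k
    using that fg refl[OF g] refl[OF f'] refl[OF g']
    by (auto simp: less_Suc_eq numeral_eq_Suc)
  then have "(pointwise I switch [f, g, f', g'], pointwise I switch [g, g, f', g']) \<in> \<theta>"
    by (intro congruence_pointwise[of 4]) (auto simp: switch_def intro: nth_mem)
  moreover have "f' \<in> extensional I" "g' \<in> extensional I"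
    using f' g' unfolding filtered_power_def by (simp_all add: PiE_iff)
  then have "pointwise I switch [f, g, f', g'] = f'" "pointwise I switch [g, g, f', g'] = g'"
    by (auto intro!: pointwise_eqI simp: switch_def agree)
  ultimately show ?thesis by simp
qed

lemma congruence_iff_equalizer_mem:
  assumes f: "f \<in> filtered_power A I F" and g: "g \<in> filtered_power A I F"
  shows "(f, g) \<in> \<theta> \<longleftrightarrow> {i \<in> I. f i = g i} \<in> congruence_filter A I F \<theta>"
proof
  assume "(f, g) \<in> \<theta>"
  then show "{i \<in> I. f i = g i} \<in> congruence_filter A I F \<theta>"
    using congruence_transfer equalizer_filter_block[OF filter f g]
    unfolding congruence_filter_def by blast
qed (use f g in \<open>auto simp: congruence_filter_def\<close>)

lemma top_mem_congruence_filter: "I \<in> congruence_filter A I F \<theta>"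
proof -
  have "(f, g) \<in> \<theta>" if f: "f \<in> filtered_power A I F" and "g \<in> filtered_power A I F"
    and "\<forall>i\<in>I. f i = g i" for f g
  proof -
    have "f \<in> extensional I" "g \<in> extensional I"
      using that unfolding filtered_power_def PiE_def by auto
    then have "f = g" using that by (auto intro: extensionalityI)
    then show ?thesis using f congruence_equiv unfolding equiv_def refl_on_def by blast
  qed
  then show ?thesis
    using top_filter_block[OF filter] unfolding congruence_filter_def by blast
qed

lemma Int_mem_congruence_filter:
  assumes R: "R \<in> congruence_filter A I F \<theta>" and S: "S \<in> congruence_filter A I F \<theta>"
  shows "R \<inter> S \<in> congruence_filter A I F \<theta>"
proof -
  have R_block: "R \<in> {{}} \<union> \<Union>F" and S_block: "S \<in> {{}} \<union> \<Union>F"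
    using R S unfolding congruence_filter_def by auto
  have "(f, g) \<in> \<theta>" if f: "f \<in> filtered_power A I F" and g: "g \<in> filtered_power A I F"
    and agree: "\<forall>i\<in>R \<inter> S. f i = g i" for f g
  proof -
    let ?h = "\<lambda>i. if i \<in> R then f i else g i"
    have h: "?h \<in> filtered_power A I F" by (rule glue_filtered_power[OF filter R_block f g])
    have "\<forall>i\<in>R. f i = ?h i" "\<forall>i\<in>S. ?h i = g i" using agree by auto
    then have "(f, ?h) \<in> \<theta>" and "(?h, g) \<in> \<theta>"
      using R S f g h unfolding congruence_filter_def by auto
    then show ?thesis using congruence_equiv unfolding equiv_def trans_def by blast
  qed
  then show ?thesis
    using Int_filter_block[OF filter R_block S_block] unfolding congruence_filter_def by blast
qed

lemma set_filter_on_congruence_filter: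
  "set_filter_on ({{}} \<union> \<Union>F) (congruence_filter A I F \<theta>)"
proof -
  have "congruence_filter A I F \<theta> \<subseteq> {{}} \<union> \<Union>F"
    and "\<And>R S. R \<in> congruence_filter A I F \<theta> \<Longrightarrow> S \<in> {{}} \<union> \<Union>F \<Longrightarrow> R \<subseteq> S \<Longrightarrow>
      S \<in> congruence_filter A I F \<theta>"
    unfolding congruence_filter_def by blast+
  with top_mem_congruence_filter Int_mem_congruence_filter show ?thesis
    unfolding set_filter_on_def by blast
qed

end

theorem mainTheorem2:
  fixes A :: "'a set" and I :: "'i set" and F :: "'i set set set"
    and \<theta> :: "(('i \<Rightarrow> 'a) \<times> ('i \<Rightarrow> 'a)) set"
    and Z :: "'i set set"
  assumes "infinite A"
    and "partition_filter I F"
    and "omega_congruence A I F \<theta>"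
    and "Z = {R \<in> {{}} \<union> \<Union>F. \<forall>f\<in>filtered_power A I F. \<forall>g\<in>filtered_power A I F.
                 (\<forall>i\<in>R. f i = g i) \<longrightarrow> (f, g) \<in> \<theta>}"
  shows "set_filter_on ({{}} \<union> \<Union>F) Z \<and>
         (\<forall>f\<in>filtered_power A I F. \<forall>g\<in>filtered_power A I F.
            (f, g) \<in> \<theta> \<longleftrightarrow> {i \<in> I. f i = g i} \<in> Z)"
proof -
  have "Z = congruence_filter A I F \<theta>"
    using assms(4) unfolding congruence_filter_def .
  then show ?thesis
    using set_filter_on_congruence_filter[OF assms(2,3)]
      congruence_iff_equalizer_mem[OF assms(2,3)] by blast
qed

end
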